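(* In the baseline dynamic game described in the context (standing assumptions (A1)–(A4), any $\delta\in[0,1)$), for any seller strategy and any buyer strategy that is a best response to it for every type, the seller's expected discounted payoff is at most $\pi(F)$.
   Context: Fix $\underline{\theta}<\overline{\theta}$ and $0<\underline{x}<\overline{x}$. The buyer's private type $\theta\in[\underline{\theta},\overline{\theta}]$ has CDF $F$ and density $f$ (total mass one). Let $v:[0,\overline{x}]\to\mathbb{R}$ be strictly concave, continuously differentiable, $v(0)=0$ (A1). For $x\in[\underline{x},\overline{x}]$, $u(x,\theta)=\max_{0\le x'\le x}[v(x')+\theta x']$; $x^e(\theta)$ is the unique maximizer of $v(x')+\theta x'$ over $[0,\overline{x}]$. Standing assumptions: (A2) $0<m\le f\le M$ for constants $m,M$, and $\theta-\frac{1-F(\theta)}{f(\theta)}$ strictly increasing; (A3) $0<x^e(\underline{\theta})\le\underline{x}$; (A4) $v(x^e(\theta))+\big(\theta-\frac{1-F(\theta)}{f(\theta)}\big)x^e(\theta)\ge0$ for all $\theta$. Static benchmark: a mechanism assigns each type $\theta$ a trade probability $q(\theta)\in[0,1]$, a distribution over allocations $x(\theta)\in[\underline{x},\overline{x}]$ and a payment $p(\theta)$; it is incentive compatible if $q(\theta)\mathbb{E}[u(x(\theta),\theta)]-p(\theta)\ge q(\theta')\mathbb{E}[u(x(\theta'),\theta)]-p(\theta')$ for all $\theta,\theta'$, individually rational if $q(\theta)\mathbb{E}[u(x(\theta),\theta)]-p(\theta)\ge0$. $\pi(F)$ is the maximal expected revenue $\int p\,dF$ over IC and IR mechanisms. Dynamic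 game: discrete time $t=0,1,\dots$, discount factor $\delta\in[0,1)$. Each period the seller (possibly randomizing, as a function of the history of past offers and decisions) posts one offer $(x_t,p_t)\in[\underline{x},\overline{x}]\times\mathbb{R}$; a buyer who has not purchased accepts or waits (measurably in type, mixing allowed). Acceptance by type $\theta$ at $t$ gives buyer $\delta^t(u(x_t,\theta)-p_t)$ and seller $\delta^tp_t$ and ends the game for that buyer; no purchase gives both $0$. The seller's expected payoff integrates over types according to $F$. *)

theory Defs
  imports "HOL-Probability.Probability"
begin

definition strict_concave_on :: "real set \<Rightarrow> (real \<Rightarrow> real) \<Rightarrow> bool" where
  "strict_concave_on S g \<longleftrightarrow> convex S \<and>
     (\<forall>x\<in>S. \<forall>y\<in>S. x \<noteq> y \<longrightarrow> (\<forall>t::real. 0 < t \<and> t < 1 \<longrightarrow>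
        g ((1 - t) * x + t * y) > (1 - t) * g x + t * g y))"

definition C1_on_interval :: "real \<Rightarrow> real \<Rightarrow> (real \<Rightarrow> real) \<Rightarrow> bool" where
  "C1_on_interval a b g \<longleftrightarrow> (\<exists>g'. (\<forall>x\<in>{a..b}. (g has_real_derivative g' x) (at x within {a..b}))
                                \<and> continuous_on {a..b} g')"

definition util :: "(real \<Rightarrow> real) \<Rightarrow> real \<Rightarrow> real \<Rightarrow> real" where
  "util v x \<theta> = Sup ((\<lambda>x'. v x' + \<theta> * x') ` {0..x})"

definition xeff :: "(real \<Rightarrow> real) \<Rightarrow> real \<Rightarrow> real \<Rightarrow> real" where
  "xeff v xh \<theta> = (THE y. y \<in> {0..xh} \<and> (\<forall>z\<in>{0..xh}. v z + \<theta> * z \<le> v y + \<theta> * y))"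

definition virt :: "(real \<Rightarrow> real) \<Rightarrow> (real \<Rightarrow> real) \<Rightarrow> real \<Rightarrow> real" where
  "virt F f \<theta> = \<theta> - (1 - F \<theta>) / f \<theta>"

definition typeM :: "real \<Rightarrow> real \<Rightarrow> (real \<Rightarrow> real) \<Rightarrow> real measure" where
  "typeM tlo thi f = density lborel (\<lambda>\<theta>. ennreal (indicator {tlo..thi} \<theta> * f \<theta>))"

definition A1 :: "real \<Rightarrow> (real \<Rightarrow> real) \<Rightarrow> bool" where
  "A1 xh v \<longleftrightarrow> strict_concave_on {0..xh} v \<and> C1_on_interval 0 xh v \<and> v 0 = 0"

definition A2 :: "real \<Rightarrow> real \<Rightarrow> (real \<Rightarrow> real) \<Rightarrow> (real \<Rightarrow> real) \<Rightarrow> bool" where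
  "A2 tlo thi F f \<longleftrightarrow>
     f \<in> borel_measurable borel \<and>
     (\<forall>\<theta>\<in>{tlo..thi}. F \<theta> = (LINT t:{tlo..\<theta>}|lborel. f t)) \<and> F thi = 1 \<and>
     (\<exists>m M. 0 < m \<and> (\<forall>\<theta>\<in>{tlo..thi}. m \<le> f \<theta> \<and> f \<theta> \<le> M)) \<and>
     strict_mono_on {tlo..thi} (virt F f)"

definition A3 :: "real \<Rightarrow> real \<Rightarrow> real \<Rightarrow> (real \<Rightarrow> real) \<Rightarrow> bool" where
  "A3 tlo xl xh v \<longleftrightarrow> 0 < xeff v xh tlo \<and> xeff v xh tlo \<le> xl"

definition A4 :: "real \<Rightarrow> real \<Rightarrow> real \<Rightarrow> (real \<Rightarrow> real) \<Rightarrow> (real \<Rightarrow> real) \<Rightarrow> (real \<Rightarrow> real) \<Rightarrow> bool" where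
  "A4 tlo thi xh F f v \<longleftrightarrow>
     (\<forall>\<theta>\<in>{tlo..thi}. v (xeff v xh \<theta>) + virt F f \<theta> * xeff v xh \<theta> \<ge> 0)"

text \<open>Expected utility of type theta from a lottery X over allocations in [xl,xh]
  (the integrand is evaluated at the allocation clamped to [xl,xh], which changes nothing
   since X is concentrated on [xl,xh], but makes the integrand globally measurable).\<close>
definition exp_util :: "real \<Rightarrow> real \<Rightarrow> (real \<Rightarrow> real) \<Rightarrow> real measure \<Rightarrow> real \<Rightarrow> real" where
  "exp_util xl xh v X \<theta> = (LINT x|X. util v (max xl (min xh x)) \<theta>)"

text \<open>A (direct) mechanism: trade probability q, allocation lottery X, payment p.\<close>
definition mechanism :: "real \<Rightarrow> real \<Rightarrow> real \<Rightarrow> real \<Rightarrow> (real \<Rightarrow> real) \<Rightarrow> (real \<Rightarrow> real measure) \<Rightarrow> bool" where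
  "mechanism tlo thi xl xh q X \<longleftrightarrow>
     (\<forall>\<theta>\<in>{tlo..thi}. 0 \<le> q \<theta> \<and> q \<theta> \<le> 1 \<and> prob_space (X \<theta>) \<and>
        sets (X \<theta>) = sets (borel :: real measure) \<and> (AE x in X \<theta>. x \<in> {xl..xh}))"

definition IC :: "real \<Rightarrow> real \<Rightarrow> real \<Rightarrow> real \<Rightarrow> (real \<Rightarrow> real) \<Rightarrow> (real \<Rightarrow> real) \<Rightarrow> (real \<Rightarrow> real measure) \<Rightarrow> (real \<Rightarrow> real) \<Rightarrow> bool" where
  "IC tlo thi xl xh v q X p \<longleftrightarrow>
     (\<forall>\<theta>\<in>{tlo..thi}. \<forall>\<theta>'\<in>{tlo..thi}.
        q \<theta> * exp_util xl xh v (X \<theta>) \<theta> - p \<theta> \<ge> q \<theta>' * exp_util xl xh v (X \<theta>') \<theta> - p \<theta>')"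

definition IR :: "real \<Rightarrow> real \<Rightarrow> real \<Rightarrow> real \<Rightarrow> (real \<Rightarrow> real) \<Rightarrow> (real \<Rightarrow> real) \<Rightarrow> (real \<Rightarrow> real measure) \<Rightarrow> (real \<Rightarrow> real) \<Rightarrow> bool" where
  "IR tlo thi xl xh v q X p \<longleftrightarrow> (\<forall>\<theta>\<in>{tlo..thi}. q \<theta> * exp_util xl xh v (X \<theta>) \<theta> - p \<theta> \<ge> 0)"

text \<open>pi(F): the supremum of expected revenue over IC and IR mechanisms
  (whose payment rule is integrable, so that expected revenue is defined).\<close>
definition static_rev :: "real \<Rightarrow> real \<Rightarrow> real \<Rightarrow> real \<Rightarrow> (real \<Rightarrow> real) \<Rightarrow> (real \<Rightarrow> real) \<Rightarrow> real" where
  "static_rev tlo thi xl xh f v = Sup {(LINT \<theta>|typeM tlo thi f. p \<theta>) | q X p.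
       mechanism tlo thi xl xh q X \<and> IC tlo thi xl xh v q X p \<and> IR tlo thi xl xh v q X p \<and>
       integrable (typeM tlo thi f) p}"

type_synonym offers = "nat \<Rightarrow> real \<times> real"

definition OffersM :: "offers measure" where
  "OffersM = PiM UNIV (\<lambda>_. borel)"

text \<open>Before acceptance the seller's history consists of past offers and
  rejections only, so a (randomised, history-dependent) behaviour strategy of the seller is
  (via Ionescu-Tulcea / Kuhn) the same thing as a probability distribution over offer sequences;
  allocations are in [xl,xh].\<close>
definition seller_strategy :: "real \<Rightarrow> real \<Rightarrow> offers measure \<Rightarrow> bool" where
  "seller_strategy xl xh \<mu> \<longleftrightarrow> prob_space \<mu> \<and> sets \<mu> = sets OffersM \<and>
     (AE s in \<mu>. \<forall>t. fst (s t) \<in> {xl..xh})"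

text \<open>A buyer strategy of a single type: b t s is the probability of accepting at period t
  (given no earlier purchase), depending only on the offers s 0, ..., s t, measurably.\<close>
definition buyer_rule :: "(nat \<Rightarrow> offers \<Rightarrow> real) \<Rightarrow> bool" where
  "buyer_rule b \<longleftrightarrow> (\<forall>t s. 0 \<le> b t s \<and> b t s \<le> 1) \<and>
     (\<forall>t s s'. (\<forall>k\<le>t. s k = s' k) \<longrightarrow> b t s = b t s') \<and>
     (\<forall>t. b t \<in> borel_measurable OffersM)"

definition buyer_strategy :: "(real \<Rightarrow> nat \<Rightarrow> offers \<Rightarrow> real) \<Rightarrow> bool" where
  "buyer_strategy \<beta> \<longleftrightarrow> (\<forall>\<theta>. buyer_rule (\<beta> \<theta>)) \<and>
     (\<forall>t. (\<lambda>(\<theta>, s). \<beta> \<theta> t s) \<in> borel_measurable (borel \<Otimes>\<^sub>M OffersM))"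

definition acc_prob :: "(nat \<Rightarrow> offers \<Rightarrow> real) \<Rightarrow> nat \<Rightarrow> offers \<Rightarrow> real" where
  "acc_prob b t s = b t s * (\<Prod>k<t. 1 - b k s)"

definition PathTimeM :: "offers measure \<Rightarrow> (offers \<times> nat) measure" where
  "PathTimeM \<mu> = \<mu> \<Otimes>\<^sub>M count_space UNIV"

definition buyer_flow :: "real \<Rightarrow> real \<Rightarrow> (real \<Rightarrow> real) \<Rightarrow> real \<Rightarrow> real \<Rightarrow> (nat \<Rightarrow> offers \<Rightarrow> real) \<Rightarrow> offers \<times> nat \<Rightarrow> real" where
  "buyer_flow xl xh v \<delta> \<theta> b = (\<lambda>(s, t). \<delta> ^ t * acc_prob b t s * (util v (max xl (min xh (fst (s t)))) \<theta> - snd (s t)))"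

definition buyer_payoff :: "real \<Rightarrow> real \<Rightarrow> (real \<Rightarrow> real) \<Rightarrow> real \<Rightarrow> offers measure \<Rightarrow> real \<Rightarrow> (nat \<Rightarrow> offers \<Rightarrow> real) \<Rightarrow> real" where
  "buyer_payoff xl xh v \<delta> \<mu> \<theta> b = (LINT z|PathTimeM \<mu>. buyer_flow xl xh v \<delta> \<theta> b z)"

definition best_response :: "real \<Rightarrow> real \<Rightarrow> (real \<Rightarrow> real) \<Rightarrow> real \<Rightarrow> offers measure \<Rightarrow> real \<Rightarrow> (nat \<Rightarrow> offers \<Rightarrow> real) \<Rightarrow> bool" where
  "best_response xl xh v \<delta> \<mu> \<theta> b \<longleftrightarrow> buyer_rule b \<and>
     integrable (PathTimeM \<mu>) (buyer_flow xl xh v \<delta> \<theta> b) \<and>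
     (\<forall>b'. buyer_rule b' \<and> integrable (PathTimeM \<mu>) (buyer_flow xl xh v \<delta> \<theta> b') \<longrightarrow>
        buyer_payoff xl xh v \<delta> \<mu> \<theta> b' \<le> buyer_payoff xl xh v \<delta> \<mu> \<theta> b)"

definition seller_flow :: "real \<Rightarrow> (real \<Rightarrow> nat \<Rightarrow> offers \<Rightarrow> real) \<Rightarrow> real \<times> (offers \<times> nat) \<Rightarrow> real" where
  "seller_flow \<delta> \<beta> = (\<lambda>(\<theta>, (s, t)). \<delta> ^ t * acc_prob (\<beta> \<theta>) t s * snd (s t))"

definition seller_payoff :: "real \<Rightarrow> real \<Rightarrow> (real \<Rightarrow> real) \<Rightarrow> real \<Rightarrow> offers measure \<Rightarrow> (real \<Rightarrow> nat \<Rightarrow> offers \<Rightarrow> real) \<Rightarrow> real" where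
  "seller_payoff tlo thi f \<delta> \<mu> \<beta> = (LINT z|(typeM tlo thi f \<Otimes>\<^sub>M PathTimeM \<mu>). seller_flow \<delta> \<beta> z)"

end

theory Submission
  imports Defs
begin

text \<open>This is the revelation principle. Fix the seller's strategy and an equilibrium buyer
  strategy \<open>\<beta>\<close>, and let a type reporting \<open>\<theta>'\<close> receive what type \<open>\<theta>'\<close> obtains in the game:
  trade with probability \<open>q(\<theta>')\<close>, the expected discount factor at the purchase date; an allocation
  drawn from the law of the purchased quantity under the path measure reweighted by that discount
  factor; and payment \<open>p(\<theta>')\<close>, the expected discounted price. Type \<open>\<theta>\<close> imitating \<open>\<theta>'\<close> in the game
  earns exactly \<open>q(\<theta>') E u(X(\<theta>'), \<theta>) - p(\<theta>')\<close>, so best responses give incentive compatibility,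
  and comparing with never buying gives individual rationality. By Fubini the seller's payoff is
  \<open>\<integral> p dF\<close>, which is therefore at most \<open>\<pi>(F)\<close>.\<close>

lemma acc_prob_nonneg:
  assumes "\<And>k. 0 \<le> b k s \<and> b k s \<le> 1"
  shows "0 \<le> acc_prob b t s"
  using assms unfolding acc_prob_def by (auto intro!: mult_nonneg_nonneg prod_nonneg)

lemma sum_acc_prob: "(\<Sum>t<n. acc_prob b t s) = 1 - (\<Prod>k<n. 1 - b k s)"
  by (induction n) (simp_all add: acc_prob_def algebra_simps)

lemma sum_acc_prob_le_1:
  assumes "\<And>k. b k s \<le> 1"
  shows "(\<Sum>t<n. acc_prob b t s) \<le> 1"
  unfolding sum_acc_prob using assms by (auto intro!: prod_nonneg)

lemma buyer_rule_bounds: "buyer_rule b \<Longrightarrow> 0 \<le> b k s \<and> b k s \<le> 1"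
  unfolding buyer_rule_def by auto

lemma acc_prob_measurable:
  assumes "buyer_rule b"
  shows "acc_prob b t \<in> borel_measurable OffersM"
proof -
  have [measurable]: "b k \<in> borel_measurable OffersM" for k
    using assms unfolding buyer_rule_def by auto
  show ?thesis unfolding acc_prob_def by measurable
qed

lemma A1_imp_bounded:
  assumes "A1 xh v"
  obtains K where "\<forall>x\<in>{0..xh}. \<bar>v x\<bar> \<le> K"
proof -
  obtain v' where "\<forall>x\<in>{0..xh}. (v has_real_derivative v' x) (at x within {0..xh})"
    using assms unfolding A1_def C1_on_interval_def by blast
  then have "continuous_on {0..xh} v"
    by (auto simp: continuous_on_eq_continuous_within intro: DERIV_continuous)
  then have "bounded (v ` {0..xh})"
    by (intro compact_imp_bounded compact_continuous_image) auto
  then show ?thesis using that unfolding bounded_iff by auto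
qed

lemma util_set_abs_le:
  fixes v :: "real \<Rightarrow> real"
  assumes "\<forall>x\<in>{0..xh}. \<bar>v x\<bar> \<le> K" and "y \<le> xh"
    and "e \<in> (\<lambda>x'. v x' + \<theta> * x') ` {0..y}"
  shows "\<bar>e\<bar> \<le> K + \<bar>\<theta>\<bar> * xh"
proof -
  obtain x' where x': "x' \<in> {0..y}" "e = v x' + \<theta> * x'" using assms(3) by auto
  have "\<bar>x'\<bar> \<le> xh" using x' assms(2) by (auto simp: abs_if)
  then have "\<bar>\<theta> * x'\<bar> \<le> \<bar>\<theta>\<bar> * xh" by (simp add: abs_mult mult_left_mono)
  moreover have "\<bar>v x'\<bar> \<le> K" using assms(1,2) x' by auto
  ultimately show ?thesis using x' by linarith
qed

lemma util_abs_le: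
  assumes K: "\<forall>x\<in>{0..xh}. \<bar>v x\<bar> \<le> K" and "0 \<le> y" "y \<le> xh"
  shows "\<bar>util v y \<theta>\<bar> \<le> K + \<bar>\<theta>\<bar> * xh"
proof -
  let ?S = "(\<lambda>x'. v x' + \<theta> * x') ` {0..y}"
  note bound = util_set_abs_le[OF K \<open>y \<le> xh\<close>, where \<theta>=\<theta>]
  have zero: "v 0 + \<theta> * 0 \<in> ?S" using \<open>0 \<le> y\<close> by (intro image_eqI[of _ _ 0]) auto
  have "bdd_above ?S" using bound by (intro bdd_aboveI[of _ "K + \<bar>\<theta>\<bar> * xh"]) (meson abs_le_D1)
  then have "v 0 + \<theta> * 0 \<le> Sup ?S" by (rule cSup_upper[OF zero])
  moreover have "Sup ?S \<le> K + \<bar>\<theta>\<bar> * xh" using bound zero by (intro cSup_least) fastforce+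
  moreover have "\<bar>v 0 + \<theta> * 0\<bar> \<le> K + \<bar>\<theta>\<bar> * xh" by (rule bound[OF zero])
  ultimately show ?thesis unfolding util_def by linarith
qed

lemma util_mono:
  assumes K: "\<forall>x\<in>{0..xh}. \<bar>v x\<bar> \<le> K" and "0 \<le> a" "a \<le> b" "b \<le> xh"
  shows "util v a \<theta> \<le> util v b \<theta>"
proof -
  have "bdd_above ((\<lambda>x'. v x' + \<theta> * x') ` {0..b})"
    using util_set_abs_le[OF K \<open>b \<le> xh\<close>, where \<theta>=\<theta>]
    by (intro bdd_aboveI[of _ "K + \<bar>\<theta>\<bar> * xh"]) (meson abs_le_D1)
  then show ?thesis unfolding util_def using assms by (intro cSup_subset_mono) auto
qed

lemma clamped_util_measurable:
  assumes "\<forall>x\<in>{0..xh}. \<bar>v x\<bar> \<le> K" and "0 \<le> xl" "xl \<le> xh"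
  shows "(\<lambda>y. util v (max xl (min xh y)) \<theta>) \<in> borel_measurable borel"
  using assms by (intro borel_measurable_mono monoI util_mono) auto

lemma exp_util_abs_le:
  assumes "prob_space X" "\<And>x. \<bar>util v (max xl (min xh x)) \<theta>\<bar> \<le> B"
  shows "\<bar>exp_util xl xh v X \<theta>\<bar> \<le> B"
proof -
  interpret prob_space X by fact
  have "norm (exp_util xl xh v X \<theta>) \<le> (LINT x|X. norm (util v (max xl (min xh x)) \<theta>))"
    unfolding exp_util_def by (rule integral_norm_bound)
  also have "\<dots> \<le> (LINT x|X. B)"
    using assms(2) order_trans[OF abs_ge_zero assms(2)] by (intro integral_mono') auto
  also have "\<dots> = B" by (simp add: prob_space)
  finally show ?thesis by simp
qed

lemma measurable_at_purchase:
  assumes "sets \<mu> = sets OffersM" "\<And>t. h t \<in> borel_measurable OffersM"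
  shows "(\<lambda>z. h (snd z) (fst z)) \<in> borel_measurable (PathTimeM \<mu>)"
  unfolding PathTimeM_def
proof (rule measurable_compose_countable'[where f="\<lambda>t z. h t (fst z)" and g=snd and I=UNIV])
  show "(\<lambda>z. h t (fst z)) \<in> borel_measurable (\<mu> \<Otimes>\<^sub>M count_space UNIV)" for t
    using assms(2)[of t] measurable_cong_sets[OF assms(1) refl]
    by (intro measurable_compose[OF measurable_fst]) auto
qed auto

definition disc_weight :: "real \<Rightarrow> (nat \<Rightarrow> offers \<Rightarrow> real) \<Rightarrow> offers \<times> nat \<Rightarrow> real" where
  "disc_weight \<delta> b z = \<delta> ^ snd z * acc_prob b (snd z) (fst z)"

definition purchase_alloc :: "real \<Rightarrow> real \<Rightarrow> offers \<times> nat \<Rightarrow> real" where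
  "purchase_alloc xl xh z = max xl (min xh (fst (fst z (snd z))))"

definition purchase_price :: "offers \<times> nat \<Rightarrow> real" where
  "purchase_price z = snd (fst z (snd z))"

lemma purchase_alloc_bounds: "xl \<le> xh \<Longrightarrow> purchase_alloc xl xh z \<in> {xl..xh}"
  by (simp add: purchase_alloc_def)

lemma buyer_flow_eq:
  "buyer_flow xl xh v \<delta> \<theta> b z =
     disc_weight \<delta> b z * util v (purchase_alloc xl xh z) \<theta> - disc_weight \<delta> b z * purchase_price z"
  by (simp add: buyer_flow_def disc_weight_def purchase_alloc_def purchase_price_def
      split_beta algebra_simps)

lemma seller_flow_eq: "seller_flow \<delta> \<beta> (\<theta>, z) = disc_weight \<delta> (\<beta> \<theta>) z * purchase_price z"
  by (simp add: seller_flow_def disc_weight_def purchase_price_def split_beta)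

definition trade_prob :: "offers measure \<Rightarrow> real \<Rightarrow> (nat \<Rightarrow> offers \<Rightarrow> real) \<Rightarrow> real" where
  "trade_prob \<mu> \<delta> b = (LINT z|PathTimeM \<mu>. disc_weight \<delta> b z)"

text \<open>If the buyer (almost surely) never buys, the lottery is irrelevant; any point of
  \<open>[xl, xh]\<close> will do.\<close>
definition trade_lottery ::
    "offers measure \<Rightarrow> real \<Rightarrow> real \<Rightarrow> real \<Rightarrow> (nat \<Rightarrow> offers \<Rightarrow> real) \<Rightarrow> real measure" where
  "trade_lottery \<mu> \<delta> xl xh b =
     (if trade_prob \<mu> \<delta> b = 0 then return borel xl
      else distr (density (PathTimeM \<mu>) (\<lambda>z. ennreal (disc_weight \<delta> b z / trade_prob \<mu> \<delta> b)))
             borel (purchase_alloc xl xh))"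

context
  fixes \<mu> :: "offers measure" and \<delta> :: real
  assumes prob: "prob_space \<mu>" and sets_eq: "sets \<mu> = sets OffersM"
    and discount: "0 \<le> \<delta>" "\<delta> \<le> 1"
begin

lemma disc_weight_nonneg:
  assumes "buyer_rule b"
  shows "0 \<le> disc_weight \<delta> b z"
proof -
  have "0 \<le> acc_prob b t s" for t s using buyer_rule_bounds[OF assms] by (intro acc_prob_nonneg) blast
  then show ?thesis using discount by (simp add: disc_weight_def)
qed

lemma disc_weight_measurable:
  "buyer_rule b \<Longrightarrow> disc_weight \<delta> b \<in> borel_measurable (PathTimeM \<mu>)"
  using measurable_at_purchase[OF sets_eq, of "\<lambda>t s. \<delta> ^ t * acc_prob b t s"] acc_prob_measurable
  by (simp add: disc_weight_def[abs_def])

lemma purchase_alloc_measurable: "purchase_alloc xl xh \<in> borel_measurable (PathTimeM \<mu>)"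
proof -
  have "(\<lambda>s. s t) \<in> OffersM \<rightarrow>\<^sub>M borel" for t
    unfolding OffersM_def by (rule measurable_component_singleton) simp
  then have [measurable]: "(\<lambda>s. fst (s t)) \<in> borel_measurable OffersM" for t
    by (rule measurable_compose) (intro borel_measurable_continuous_onI continuous_intros)
  have "(\<lambda>s. max xl (min xh (fst (s t)))) \<in> borel_measurable OffersM" for t
    by measurable
  then show ?thesis
    using measurable_at_purchase[OF sets_eq, of "\<lambda>t s. max xl (min xh (fst (s t)))"]
    by (simp add: purchase_alloc_def[abs_def])
qed

text \<open>Summing over purchase dates first, the weights are bounded by the telescoping sum of the
  acceptance probabilities.\<close>
lemma nn_integral_disc_weight_le_1:
  assumes b: "buyer_rule b"
  shows "(\<integral>\<^sup>+z. ennreal (disc_weight \<delta> b z) \<partial>PathTimeM \<mu>) \<le> 1"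
proof -
  interpret prob_space \<mu> by (rule prob)
  interpret C: sigma_finite_measure "count_space (UNIV::nat set)"
    by (rule sigma_finite_measure_count_space)
  let ?w = "disc_weight \<delta> b"
  have "(\<integral>\<^sup>+z. ennreal (?w z) \<partial>PathTimeM \<mu>) = (\<integral>\<^sup>+s. \<integral>\<^sup>+t. ennreal (?w (s,t)) \<partial>count_space UNIV \<partial>\<mu>)"
    unfolding PathTimeM_def
    by (rule C.nn_integral_fst[symmetric]) (use disc_weight_measurable[OF b] in \<open>simp add: PathTimeM_def\<close>)
  also have "\<dots> = (\<integral>\<^sup>+s. (\<Sum>t. ennreal (?w (s,t))) \<partial>\<mu>)"
    by (simp add: nn_integral_count_space_nat)
  also have "\<dots> \<le> (\<integral>\<^sup>+s. 1 \<partial>\<mu>)"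
  proof (rule nn_integral_mono)
    fix s
    have "(\<Sum>t<n. ?w (s,t)) \<le> 1" for n
    proof -
      have "(\<Sum>t<n. ?w (s,t)) \<le> (\<Sum>t<n. acc_prob b t s)"
        using acc_prob_nonneg[OF buyer_rule_bounds[OF b]] discount
        by (intro sum_mono) (auto simp: disc_weight_def intro!: mult_left_le_one_le power_le_one)
      also have "\<dots> \<le> 1" using buyer_rule_bounds[OF b] by (intro sum_acc_prob_le_1) blast
      finally show ?thesis .
    qed
    then have "(\<Sum>t<n. ennreal (?w (s,t))) \<le> 1" for n
      using disc_weight_nonneg[OF b] by (subst sum_ennreal) (auto intro: ennreal_leI)
    then show "(\<Sum>t. ennreal (?w (s,t))) \<le> 1"
      by (simp add: suminf_eq_SUP SUP_least)
  qed
  also have "\<dots> = 1" by (simp add: emeasure_space_1)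
  finally show ?thesis .
qed

lemma integrable_disc_weight: "buyer_rule b \<Longrightarrow> integrable (PathTimeM \<mu>) (disc_weight \<delta> b)"
  using le_less_trans[OF nn_integral_disc_weight_le_1 ennreal_one_less_top]
    disc_weight_nonneg disc_weight_measurable
  by (intro integrableI_nonneg) auto

lemma trade_prob_bounds:
  assumes "buyer_rule b"
  shows "0 \<le> trade_prob \<mu> \<delta> b" "trade_prob \<mu> \<delta> b \<le> 1"
proof -
  show "0 \<le> trade_prob \<mu> \<delta> b"
    unfolding trade_prob_def using disc_weight_nonneg[OF assms] by (intro integral_nonneg_AE) auto
  have "ennreal (trade_prob \<mu> \<delta> b) \<le> 1"
    using nn_integral_disc_weight_le_1[OF assms] disc_weight_nonneg[OF assms]
      nn_integral_eq_integral[OF integrable_disc_weight[OF assms]]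
    by (simp add: trade_prob_def)
  then show "trade_prob \<mu> \<delta> b \<le> 1" by simp
qed

lemma prob_space_reweighted_paths:
  assumes b: "buyer_rule b" and pos: "0 < trade_prob \<mu> \<delta> b"
  shows "prob_space (density (PathTimeM \<mu>) (\<lambda>z. ennreal (disc_weight \<delta> b z / trade_prob \<mu> \<delta> b)))"
    (is "prob_space ?D")
proof (rule prob_spaceI)
  have [measurable]: "disc_weight \<delta> b \<in> borel_measurable (PathTimeM \<mu>)"
    by (rule disc_weight_measurable[OF b])
  have "emeasure ?D (space ?D) = (\<integral>\<^sup>+z. ennreal (disc_weight \<delta> b z / trade_prob \<mu> \<delta> b) \<partial>PathTimeM \<mu>)"
    by (simp add: emeasure_density)
  also have "\<dots> = ennreal (LINT z|PathTimeM \<mu>. disc_weight \<delta> b z / trade_prob \<mu> \<delta> b)"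
    using integrable_disc_weight[OF b] disc_weight_nonneg[OF b] pos
    by (intro nn_integral_eq_integral) auto
  also have "(LINT z|PathTimeM \<mu>. disc_weight \<delta> b z / trade_prob \<mu> \<delta> b) = 1"
    using pos by (simp add: trade_prob_def)
  finally show "emeasure ?D (space ?D) = 1" by simp
qed

lemma trade_lottery_in_mechanism:
  assumes b: "buyer_rule b" and "xl \<le> xh"
  shows "prob_space (trade_lottery \<mu> \<delta> xl xh b)"
    and "sets (trade_lottery \<mu> \<delta> xl xh b) = sets borel"
    and "AE x in trade_lottery \<mu> \<delta> xl xh b. x \<in> {xl..xh}"
proof -
  show "sets (trade_lottery \<mu> \<delta> xl xh b) = sets borel" by (simp add: trade_lottery_def)
  have "prob_space (trade_lottery \<mu> \<delta> xl xh b) \<and> (AE x in trade_lottery \<mu> \<delta> xl xh b. x \<in> {xl..xh})"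
  proof (cases "trade_prob \<mu> \<delta> b = 0")
    case True
    then have point_mass: "trade_lottery \<mu> \<delta> xl xh b = return borel xl" by (simp add: trade_lottery_def)
    have "AE x in return borel xl. x \<in> {xl..xh}" using \<open>xl \<le> xh\<close> by (subst AE_return) auto
    then show ?thesis unfolding point_mass by (simp add: prob_space_return)
  next
    case False
    let ?D = "density (PathTimeM \<mu>) (\<lambda>z. ennreal (disc_weight \<delta> b z / trade_prob \<mu> \<delta> b))"
    have lottery: "trade_lottery \<mu> \<delta> xl xh b = distr ?D borel (purchase_alloc xl xh)"
      using False by (simp add: trade_lottery_def)
    have "0 < trade_prob \<mu> \<delta> b" using False trade_prob_bounds(1)[OF b] by simp
    then have "prob_space (distr ?D borel (purchase_alloc xl xh))"
      using prob_space_reweighted_paths[OF b] purchase_alloc_measurable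
      by (auto intro!: prob_space.prob_space_distr)
    moreover have "AE x in distr ?D borel (purchase_alloc xl xh). x \<in> {xl..xh}"
      using purchase_alloc_bounds[OF \<open>xl \<le> xh\<close>]
      by (subst AE_distr_iff) (auto simp: purchase_alloc_measurable)
    ultimately show ?thesis unfolding lottery by simp
  qed
  then show "prob_space (trade_lottery \<mu> \<delta> xl xh b)" "AE x in trade_lottery \<mu> \<delta> xl xh b. x \<in> {xl..xh}"
    by auto
qed

context
  fixes v :: "real \<Rightarrow> real" and K xl xh :: real
  assumes v_bounded: "\<forall>x\<in>{0..xh}. \<bar>v x\<bar> \<le> K" and alloc_range: "0 \<le> xl" "xl \<le> xh"
begin

lemma util_purchase_alloc_abs_le: "\<bar>util v (purchase_alloc xl xh z) \<theta>\<bar> \<le> K + \<bar>\<theta>\<bar> * xh"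
  using purchase_alloc_bounds[OF alloc_range(2), of z] alloc_range by (intro util_abs_le[OF v_bounded]) auto

lemma util_purchase_alloc_measurable:
  "(\<lambda>z. util v (purchase_alloc xl xh z) \<theta>) \<in> borel_measurable (PathTimeM \<mu>)"
proof -
  have "util v (purchase_alloc xl xh z) \<theta> = util v (max xl (min xh (purchase_alloc xl xh z))) \<theta>" for z
    using purchase_alloc_bounds[OF alloc_range(2)] by simp
  then show ?thesis
    using measurable_compose[OF purchase_alloc_measurable clamped_util_measurable[OF v_bounded alloc_range]]
    by simp
qed

lemma integrable_disc_weight_util:
  assumes b: "buyer_rule b"
  shows "integrable (PathTimeM \<mu>) (\<lambda>z. disc_weight \<delta> b z * util v (purchase_alloc xl xh z) \<theta>)"
proof (rule Bochner_Integration.integrable_bound)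
  show "integrable (PathTimeM \<mu>) (\<lambda>z. (K + \<bar>\<theta>\<bar> * xh) * disc_weight \<delta> b z)"
    using integrable_disc_weight[OF b] by simp
  show "(\<lambda>z. disc_weight \<delta> b z * util v (purchase_alloc xl xh z) \<theta>) \<in> borel_measurable (PathTimeM \<mu>)"
    using disc_weight_measurable[OF b] util_purchase_alloc_measurable by measurable
  show "AE z in PathTimeM \<mu>. norm (disc_weight \<delta> b z * util v (purchase_alloc xl xh z) \<theta>)
      \<le> norm ((K + \<bar>\<theta>\<bar> * xh) * disc_weight \<delta> b z)"
  proof (intro AE_I2)
    fix z
    have "\<bar>util v (purchase_alloc xl xh z) \<theta>\<bar> \<le> \<bar>K + \<bar>\<theta>\<bar> * xh\<bar>"
      using util_purchase_alloc_abs_le[of z \<theta>] by linarith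
    then show "norm (disc_weight \<delta> b z * util v (purchase_alloc xl xh z) \<theta>)
        \<le> norm ((K + \<bar>\<theta>\<bar> * xh) * disc_weight \<delta> b z)"
      using disc_weight_nonneg[OF b, of z] by (simp add: abs_mult) (metis mult.commute mult_left_mono)
  qed
qed

lemma trade_prob_mult_exp_util:
  assumes b: "buyer_rule b"
  shows "trade_prob \<mu> \<delta> b * exp_util xl xh v (trade_lottery \<mu> \<delta> xl xh b) \<theta> =
    (LINT z|PathTimeM \<mu>. disc_weight \<delta> b z * util v (purchase_alloc xl xh z) \<theta>)"
proof (cases "trade_prob \<mu> \<delta> b = 0")
  case True
  then have "AE z in PathTimeM \<mu>. disc_weight \<delta> b z = 0"
    using integrable_disc_weight[OF b] disc_weight_nonneg[OF b]
    by (subst integral_nonneg_eq_0_iff_AE[symmetric]) (auto simp: trade_prob_def)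
  then have "(LINT z|PathTimeM \<mu>. disc_weight \<delta> b z * util v (purchase_alloc xl xh z) \<theta>) = 0"
    by (intro integral_eq_zero_AE) auto
  then show ?thesis using True by simp
next
  case False
  let ?q = "trade_prob \<mu> \<delta> b"
  have pos: "0 < ?q" using False trade_prob_bounds(1)[OF b] by simp
  have clamp: "max xl (min xh (purchase_alloc xl xh z)) = purchase_alloc xl xh z" for z
    using purchase_alloc_bounds[OF alloc_range(2)] by simp
  have "exp_util xl xh v (trade_lottery \<mu> \<delta> xl xh b) \<theta> =
      (LINT z|density (PathTimeM \<mu>) (\<lambda>z. ennreal (disc_weight \<delta> b z / ?q)).
         util v (purchase_alloc xl xh z) \<theta>)"
    unfolding exp_util_def trade_lottery_def using False
    by (simp add: integral_distr purchase_alloc_measurable clamp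
        clamped_util_measurable[OF v_bounded alloc_range])
  also have "\<dots> = (LINT z|PathTimeM \<mu>. disc_weight \<delta> b z / ?q * util v (purchase_alloc xl xh z) \<theta>)"
    using disc_weight_nonneg[OF b] disc_weight_measurable[OF b] pos
    by (subst integral_density) (auto intro!: util_purchase_alloc_measurable)
  also have "\<dots> = (LINT z|PathTimeM \<mu>. disc_weight \<delta> b z * util v (purchase_alloc xl xh z) \<theta>) / ?q"
    by simp
  finally show ?thesis using pos by simp
qed

lemma integrable_disc_weight_price:
  assumes b: "buyer_rule b" and flow: "integrable (PathTimeM \<mu>) (buyer_flow xl xh v \<delta> \<theta> b)"
  shows "integrable (PathTimeM \<mu>) (\<lambda>z. disc_weight \<delta> b z * purchase_price z)"
  using Bochner_Integration.integrable_diff[OF integrable_disc_weight_util[OF b, where \<theta>=\<theta>] flow]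
  by (simp add: buyer_flow_eq)

lemma buyer_payoff_eq_direct:
  assumes b: "buyer_rule b"
    and pay: "integrable (PathTimeM \<mu>) (\<lambda>z. disc_weight \<delta> b z * purchase_price z)"
  shows "integrable (PathTimeM \<mu>) (buyer_flow xl xh v \<delta> \<theta> b)"
    and "buyer_payoff xl xh v \<delta> \<mu> \<theta> b =
      trade_prob \<mu> \<delta> b * exp_util xl xh v (trade_lottery \<mu> \<delta> xl xh b) \<theta>
      - (LINT z|PathTimeM \<mu>. disc_weight \<delta> b z * purchase_price z)"
  unfolding buyer_payoff_def buyer_flow_eq[abs_def] trade_prob_mult_exp_util[OF b]
  using integrable_disc_weight_util[OF b] pay by auto

lemma buyer_payoff_imitating:
  fixes \<beta> :: "real \<Rightarrow> nat \<Rightarrow> offers \<Rightarrow> real"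
  assumes \<beta>: "buyer_strategy \<beta>" and BR: "best_response xl xh v \<delta> \<mu> \<theta>' (\<beta> \<theta>')"
  shows "integrable (PathTimeM \<mu>) (buyer_flow xl xh v \<delta> \<theta> (\<beta> \<theta>'))"
    and "buyer_payoff xl xh v \<delta> \<mu> \<theta> (\<beta> \<theta>') =
      trade_prob \<mu> \<delta> (\<beta> \<theta>') * exp_util xl xh v (trade_lottery \<mu> \<delta> xl xh (\<beta> \<theta>')) \<theta>
      - (LINT z|PathTimeM \<mu>. seller_flow \<delta> \<beta> (\<theta>', z))"
proof -
  have br: "buyer_rule (\<beta> \<theta>')" using \<beta> unfolding buyer_strategy_def by auto
  have "integrable (PathTimeM \<mu>) (\<lambda>z. disc_weight \<delta> (\<beta> \<theta>') z * purchase_price z)"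
    using BR br by (intro integrable_disc_weight_price) (auto simp: best_response_def)
  then show "integrable (PathTimeM \<mu>) (buyer_flow xl xh v \<delta> \<theta> (\<beta> \<theta>'))"
    "buyer_payoff xl xh v \<delta> \<mu> \<theta> (\<beta> \<theta>') =
      trade_prob \<mu> \<delta> (\<beta> \<theta>') * exp_util xl xh v (trade_lottery \<mu> \<delta> xl xh (\<beta> \<theta>')) \<theta>
      - (LINT z|PathTimeM \<mu>. seller_flow \<delta> \<beta> (\<theta>', z))"
    using buyer_payoff_eq_direct[OF br] by (simp_all add: seller_flow_eq)
qed

lemma equilibrium_direct_mechanism:
  fixes \<beta> :: "real \<Rightarrow> nat \<Rightarrow> offers \<Rightarrow> real"
  assumes \<beta>: "buyer_strategy \<beta>" and BR: "\<forall>\<theta>\<in>{tlo..thi}. best_response xl xh v \<delta> \<mu> \<theta> (\<beta> \<theta>)"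
  defines "q \<theta> \<equiv> trade_prob \<mu> \<delta> (\<beta> \<theta>)" and "X \<theta> \<equiv> trade_lottery \<mu> \<delta> xl xh (\<beta> \<theta>)"
    and "p \<theta> \<equiv> LINT z|PathTimeM \<mu>. seller_flow \<delta> \<beta> (\<theta>, z)"
  shows "mechanism tlo thi xl xh q X \<and> IC tlo thi xl xh v q X p \<and> IR tlo thi xl xh v q X p"
proof -
  have br: "buyer_rule (\<beta> \<theta>)" for \<theta> using \<beta> unfolding buyer_strategy_def by auto
  have payoff: "integrable (PathTimeM \<mu>) (buyer_flow xl xh v \<delta> \<theta> (\<beta> \<theta>'))"
      "buyer_payoff xl xh v \<delta> \<mu> \<theta> (\<beta> \<theta>') = q \<theta>' * exp_util xl xh v (X \<theta>') \<theta> - p \<theta>'"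
    if "\<theta>' \<in> {tlo..thi}" for \<theta> \<theta>'
    using buyer_payoff_imitating[OF \<beta>] BR that unfolding q_def X_def p_def by auto
  have "mechanism tlo thi xl xh q X"
    unfolding mechanism_def q_def X_def
    using trade_prob_bounds[OF br] trade_lottery_in_mechanism[OF br alloc_range(2)] by auto
  moreover have "IC tlo thi xl xh v q X p"
    unfolding IC_def
  proof (intro ballI)
    fix \<theta> \<theta>' assume \<theta>: "\<theta> \<in> {tlo..thi}" and \<theta>': "\<theta>' \<in> {tlo..thi}"
    then have "buyer_payoff xl xh v \<delta> \<mu> \<theta> (\<beta> \<theta>') \<le> buyer_payoff xl xh v \<delta> \<mu> \<theta> (\<beta> \<theta>)"
      using BR br payoff(1) unfolding best_response_def by blast
    then show "q \<theta>' * exp_util xl xh v (X \<theta>') \<theta> - p \<theta>' \<le> q \<theta> * exp_util xl xh v (X \<theta>) \<theta> - p \<theta>"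
      using payoff(2) \<theta> \<theta>' by simp
  qed
  moreover have "IR tlo thi xl xh v q X p"
    unfolding IR_def
  proof (intro ballI)
    fix \<theta> assume \<theta>: "\<theta> \<in> {tlo..thi}"
    define never :: "nat \<Rightarrow> offers \<Rightarrow> real" where "never = (\<lambda>t s. 0)"
    have "buyer_flow xl xh v \<delta> \<theta> never = (\<lambda>_. 0)"
      by (simp add: fun_eq_iff buyer_flow_def acc_prob_def never_def)
    moreover have "buyer_rule never" unfolding buyer_rule_def never_def by auto
    ultimately have "0 \<le> buyer_payoff xl xh v \<delta> \<mu> \<theta> (\<beta> \<theta>)"
      using BR \<theta> unfolding best_response_def by (fastforce simp: buyer_payoff_def)
    then show "0 \<le> q \<theta> * exp_util xl xh v (X \<theta>) \<theta> - p \<theta>"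
      using payoff(2) \<theta> by simp
  qed
  ultimately show ?thesis by blast
qed

end

end

lemma IR_payment_le:
  assumes mech: "mechanism tlo thi xl xh q X" and IR: "IR tlo thi xl xh v q X p"
    and \<theta>: "\<theta> \<in> {tlo..thi}" and bound: "\<And>x. \<bar>util v (max xl (min xh x)) \<theta>\<bar> \<le> B"
  shows "p \<theta> \<le> B"
proof -
  have q: "0 \<le> q \<theta>" "q \<theta> \<le> 1" and lottery: "prob_space (X \<theta>)"
    using mech \<theta> unfolding mechanism_def by auto
  have exp_le: "\<bar>exp_util xl xh v (X \<theta>) \<theta>\<bar> \<le> B" by (rule exp_util_abs_le[OF lottery bound])
  then have "0 \<le> B" by linarith
  have "q \<theta> * exp_util xl xh v (X \<theta>) \<theta> \<le> q \<theta> * B"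
    using exp_le q by (intro mult_left_mono) auto
  also have "\<dots> \<le> B" by (rule mult_left_le_one_le[OF \<open>0 \<le> B\<close> q])
  finally show ?thesis using IR \<theta> unfolding IR_def by fastforce
qed

lemma finite_measure_typeM:
  assumes "A2 tlo thi F f"
  shows "finite_measure (typeM tlo thi f)"
proof (rule finite_measureI)
  have [measurable]: "f \<in> borel_measurable borel" using assms unfolding A2_def by auto
  obtain M where M: "\<forall>\<theta>\<in>{tlo..thi}. f \<theta> \<le> M"
    using assms unfolding A2_def by auto
  have "emeasure (typeM tlo thi f) (space (typeM tlo thi f)) =
      (\<integral>\<^sup>+\<theta>. ennreal (indicator {tlo..thi} \<theta> * f \<theta>) \<partial>lborel)"
    unfolding typeM_def by (subst emeasure_density) auto
  also have "\<dots> \<le> (\<integral>\<^sup>+\<theta>. ennreal M * indicator {tlo..thi} \<theta> \<partial>lborel)"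
    using M by (intro nn_integral_mono) (auto simp: indicator_def intro!: ennreal_leI)
  also have "\<dots> = ennreal M * emeasure lborel {tlo..thi}"
    by (rule nn_integral_cmult_indicator) auto
  also have "\<dots> < \<infinity>" by (simp add: ennreal_mult_less_top emeasure_lborel_Icc_eq)
  finally show "emeasure (typeM tlo thi f) (space (typeM tlo thi f)) \<noteq> \<infinity>" by simp
qed

lemma AE_typeM_support:
  assumes "f \<in> borel_measurable borel"
  shows "AE \<theta> in typeM tlo thi f. \<theta> \<in> {tlo..thi}"
  using assms unfolding typeM_def by (subst AE_density) (auto simp: indicator_def)

lemma revenue_le_static_rev:
  assumes fin: "finite_measure (typeM tlo thi f)" and supp: "AE \<theta> in typeM tlo thi f. \<theta> \<in> {tlo..thi}"
    and K: "\<forall>x\<in>{0..xh}. \<bar>v x\<bar> \<le> K" and alloc_range: "0 \<le> xl" "xl \<le> xh"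
    and mech: "mechanism tlo thi xl xh q X" "IC tlo thi xl xh v q X p" "IR tlo thi xl xh v q X p"
    and int: "integrable (typeM tlo thi f) p"
  shows "(LINT \<theta>|typeM tlo thi f. p \<theta>) \<le> static_rev tlo thi xl xh f v"
proof -
  let ?T = "typeM tlo thi f"
  interpret finite_measure ?T by (rule fin)
  define B where "B = K + max \<bar>tlo\<bar> \<bar>thi\<bar> * xh"
  have "0 \<le> K" using K alloc_range by force
  then have "0 \<le> B" unfolding B_def using alloc_range by (intro add_nonneg_nonneg mult_nonneg_nonneg) auto
  have util_le: "\<bar>util v (max xl (min xh x)) \<theta>\<bar> \<le> B" if "\<theta> \<in> {tlo..thi}" for x \<theta>
  proof -
    have "\<bar>util v (max xl (min xh x)) \<theta>\<bar> \<le> K + \<bar>\<theta>\<bar> * xh"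
      using alloc_range by (intro util_abs_le[OF K]) auto
    moreover have "\<bar>\<theta>\<bar> * xh \<le> max \<bar>tlo\<bar> \<bar>thi\<bar> * xh"
      using that alloc_range by (intro mult_right_mono) auto
    ultimately show ?thesis unfolding B_def by linarith
  qed
  have "bdd_above {(LINT \<theta>|?T. p' \<theta>) | q' X' p'. mechanism tlo thi xl xh q' X' \<and>
      IC tlo thi xl xh v q' X' p' \<and> IR tlo thi xl xh v q' X' p' \<and> integrable ?T p'}"
  proof (rule bdd_aboveI[of _ "B * measure ?T (space ?T)"])
    fix r assume "r \<in> {(LINT \<theta>|?T. p' \<theta>) | q' X' p'. mechanism tlo thi xl xh q' X' \<and>
      IC tlo thi xl xh v q' X' p' \<and> IR tlo thi xl xh v q' X' p' \<and> integrable ?T p'}"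
    then obtain q' X' p' where r: "r = (LINT \<theta>|?T. p' \<theta>)"
      and mech': "mechanism tlo thi xl xh q' X'" and IR': "IR tlo thi xl xh v q' X' p'"
      by blast
    have "AE \<theta> in ?T. p' \<theta> \<le> B"
      using supp by eventually_elim (use IR_payment_le[OF mech' IR'] util_le in blast)
    then have "(LINT \<theta>|?T. p' \<theta>) \<le> (LINT \<theta>|?T. B)"
      using \<open>0 \<le> B\<close> by (intro integral_mono_AE') auto
    then show "r \<le> B * measure ?T (space ?T)" using r by (simp add: mult.commute)
  qed
  then show ?thesis unfolding static_rev_def using mech int by (intro cSup_upper) blast+
qed

lemma seller_payoff_eq_expected_payment:
  assumes fin: "finite_measure (typeM tlo thi f)" and prob: "prob_space \<mu>"
    and int: "integrable (typeM tlo thi f \<Otimes>\<^sub>M PathTimeM \<mu>) (seller_flow \<delta> \<beta>)"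
  shows "integrable (typeM tlo thi f) (\<lambda>\<theta>. LINT z|PathTimeM \<mu>. seller_flow \<delta> \<beta> (\<theta>, z))"
    and "seller_payoff tlo thi f \<delta> \<mu> \<beta> =
      (LINT \<theta>|typeM tlo thi f. LINT z|PathTimeM \<mu>. seller_flow \<delta> \<beta> (\<theta>, z))"
proof -
  interpret T: finite_measure "typeM tlo thi f" by (rule fin)
  have "sigma_finite_measure (PathTimeM \<mu>)" unfolding PathTimeM_def
    by (intro sigma_finite_pair_measure prob_space_imp_sigma_finite prob sigma_finite_measure_count_space)
  then interpret pair_sigma_finite "typeM tlo thi f" "PathTimeM \<mu>"
    by (intro pair_sigma_finite.intro T.sigma_finite_measure_axioms)
  show "integrable (typeM tlo thi f) (\<lambda>\<theta>. LINT z|PathTimeM \<mu>. seller_flow \<delta> \<beta> (\<theta>, z))"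
    by (rule integrable_fst'[OF int])
  show "seller_payoff tlo thi f \<delta> \<mu> \<beta> =
      (LINT \<theta>|typeM tlo thi f. LINT z|PathTimeM \<mu>. seller_flow \<delta> \<beta> (\<theta>, z))"
    unfolding seller_payoff_def by (rule integral_fst'[OF int, symmetric])
qed

theorem corollary1:
  fixes tlo thi xl xh \<delta> :: real and F f v :: "real \<Rightarrow> real"
    and \<mu> :: "offers measure" and \<beta> :: "real \<Rightarrow> nat \<Rightarrow> offers \<Rightarrow> real"
  assumes "tlo < thi" and "0 < xl" and "xl < xh"
    and "A1 xh v" and "A2 tlo thi F f" and "A3 tlo xl xh v" and "A4 tlo thi xh F f v"
    and "0 \<le> \<delta>" and "\<delta> < 1"
    and "seller_strategy xl xh \<mu>"
    and "buyer_strategy \<beta>"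
    and "\<forall>\<theta>\<in>{tlo..thi}. best_response xl xh v \<delta> \<mu> \<theta> (\<beta> \<theta>)"
    and "integrable (typeM tlo thi f \<Otimes>\<^sub>M PathTimeM \<mu>) (seller_flow \<delta> \<beta>)"
  shows "seller_payoff tlo thi f \<delta> \<mu> \<beta> \<le> static_rev tlo thi xl xh f v"
proof -
  have \<mu>: "prob_space \<mu>" "sets \<mu> = sets OffersM"
    using \<open>seller_strategy xl xh \<mu>\<close> unfolding seller_strategy_def by auto
  obtain K where K: "\<forall>x\<in>{0..xh}. \<bar>v x\<bar> \<le> K" using A1_imp_bounded[OF \<open>A1 xh v\<close>] .
  have alloc_range: "0 \<le> xl" "xl \<le> xh" using assms(2,3) by auto
  have fin: "finite_measure (typeM tlo thi f)" by (rule finite_measure_typeM[OF \<open>A2 tlo thi F f\<close>])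
  have supp: "AE \<theta> in typeM tlo thi f. \<theta> \<in> {tlo..thi}"
    using \<open>A2 tlo thi F f\<close> by (intro AE_typeM_support) (simp add: A2_def)
  note direct = equilibrium_direct_mechanism[OF \<mu> \<open>0 \<le> \<delta>\<close> less_imp_le[OF \<open>\<delta> < 1\<close>] K alloc_range
      \<open>buyer_strategy \<beta>\<close> assms(12)]
  note payment = seller_payoff_eq_expected_payment[OF fin \<mu>(1) assms(13)]
  show ?thesis
    unfolding payment(2) using revenue_le_static_rev[OF fin supp K alloc_range _ _ _ payment(1)] direct
    by blast
qed

end
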